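(* Let $k,n,m,\mu$ be positive integers such that $m\ge n-2$, $n\ge4$ if $m=n-2$, and $k\ge\mu(n+m-1)/2$. Let $\mathcal{A}$ be a strict partial path decomposition of $\mu K_n$ of size $k$ in which at most $\mu(m-1)/2$ colour classes are $2$-factors of $\mu K_n$. Then some edge of $\mu K_n$ not in $\mathcal{A}$ can be added to one of the colour classes of $\mathcal{A}$ so that the result $\mathcal{A}'$ is a partial path decomposition of $\mu K_n$ of size $k$ in which at most $\mu(m-1)/2$ colour classes are $2$-factors of $\mu K_n$.
   Context: Graphs may have multiple edges. $\mu K_n$ is the loopless multigraph on $n$ vertices with every pair of distinct vertices joined by exactly $\mu$ edges. A decomposition of size $k$ of a graph $G$ is an ordered $k$-tuple $(G(1),\dots,G(k))$ of spanning subgraphs (colour classes; possibly edgeless) with pairwise disjoint edge sets whose union is $E(G)$. A partial decomposition of $\mu K_n$ is a decomposition of some spanning subgraph of $\mu K_n$; it is strict if that subgraph is a proper subgraph of $\mu K_n$. A partial path decomposition is one in which every colour class is a vertex-disjoint union of paths and cycles (two parallel edges form a cycle of length 2). A $2$-factor of $\mu K_n$ is a $2$-regular spanning subgraph (its cycles may have length 2). *)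

theory Defs
  imports Main
begin

text \<open>Edges of the multigraph mu K_n on vertex set {0..<n}: an edge is a triple (u, v, j)
  with u < v < n and j < mu; j distinguishes the mu parallel edges joining u and v.
  A spanning subgraph is identified with its edge set.\<close>

type_synonym edge = "nat \<times> nat \<times> nat"

definition ends :: "edge \<Rightarrow> nat set" where
  "ends e = {fst e, fst (snd e)}"

definition muKn_edges :: "nat \<Rightarrow> nat \<Rightarrow> edge set" where
  "muKn_edges mu n = {(u, v, j). u < v \<and> v < n \<and> j < mu}"

definition is_path :: "nat list \<times> edge list \<Rightarrow> bool" where
  "is_path P = (let vs = fst P; es = snd P in
     vs \<noteq> [] \<and> length es + 1 = length vs \<and> distinct vs \<and> distinct es \<and>
     (\<forall>i < length es. ends (es ! i) = {vs ! i, vs ! (i + 1)}))"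

text \<open>A cycle of length l >= 2 (length 2 = two parallel edges).\<close>
definition is_cycle :: "nat list \<times> edge list \<Rightarrow> bool" where
  "is_cycle C = (let vs = fst C; es = snd C in
     length vs \<ge> 2 \<and> length es = length vs \<and> distinct vs \<and> distinct es \<and>
     (\<forall>i < length es. ends (es ! i) = {vs ! i, vs ! ((i + 1) mod length vs)}))"

definition paths_and_cycles :: "edge set \<Rightarrow> bool" where
  "paths_and_cycles H = (\<exists>Cs :: (nat list \<times> edge list) set. finite Cs \<and>
     (\<forall>C \<in> Cs. is_path C \<or> is_cycle C) \<and>
     (\<forall>C \<in> Cs. \<forall>D \<in> Cs. C \<noteq> D \<longrightarrow> set (fst C) \<inter> set (fst D) = {}) \<and>
     H = (\<Union>C \<in> Cs. set (snd C)))"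

definition partial_decomp :: "nat \<Rightarrow> nat \<Rightarrow> nat \<Rightarrow> (nat \<Rightarrow> edge set) \<Rightarrow> bool" where
  "partial_decomp mu n k G =
     ((\<forall>i < k. G i \<subseteq> muKn_edges mu n) \<and>
      (\<forall>i < k. \<forall>j < k. i \<noteq> j \<longrightarrow> G i \<inter> G j = {}))"

definition used_edges :: "nat \<Rightarrow> (nat \<Rightarrow> edge set) \<Rightarrow> edge set" where
  "used_edges k G = (\<Union>i < k. G i)"

definition strict_partial_decomp :: "nat \<Rightarrow> nat \<Rightarrow> nat \<Rightarrow> (nat \<Rightarrow> edge set) \<Rightarrow> bool" where
  "strict_partial_decomp mu n k G =
     (partial_decomp mu n k G \<and> used_edges k G \<noteq> muKn_edges mu n)"

definition partial_path_decomp :: "nat \<Rightarrow> nat \<Rightarrow> nat \<Rightarrow> (nat \<Rightarrow> edge set) \<Rightarrow> bool" where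
  "partial_path_decomp mu n k G =
     (partial_decomp mu n k G \<and> (\<forall>i < k. paths_and_cycles (G i)))"

definition degree :: "edge set \<Rightarrow> nat \<Rightarrow> nat" where
  "degree H v = card {e \<in> H. v \<in> ends e}"

definition two_factor :: "nat \<Rightarrow> nat \<Rightarrow> edge set \<Rightarrow> bool" where
  "two_factor mu n H = (H \<subseteq> muKn_edges mu n \<and> (\<forall>v < n. degree H v = 2))"

definition num_two_factors :: "nat \<Rightarrow> nat \<Rightarrow> nat \<Rightarrow> (nat \<Rightarrow> edge set) \<Rightarrow> nat" where
  "num_two_factors mu n k G = card {i. i < k \<and> two_factor mu n (G i)}"

end

theory Submission
  imports Defs
begin

text \<open>Take an edge e = uv missing from the decomposition. Adding e to a colour class in which
  u and v both have degree at most 1 only joins two path ends (or closes a path into a cycle),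
  so the class stays a union of paths and cycles. Such a class exists: fewer than \<mu>(2n-3) used
  edges meet u or v, a class without low degrees at u and v contains two of them, and
  2k \<ge> \<mu>(n+m-1) \<ge> \<mu>(2n-3). If all 2-factor slots are taken, count degrees at u and v instead,
  weighting 2-factor classes double: a class that e would complete to a 2-factor has degree
  exactly 1 at u and v, and since 2m \<ge> n (here n \<ge> 4 for m = n-2 enters), 2k plus twice the
  number of 2-factors exceeds the fewer than 2\<mu>(n-1) used edges at u and v.\<close>

lemma ends_Pair [simp]: "ends (a, b, j) = {a, b}"
  unfolding ends_def by simp

lemma ends_nonempty: "ends e \<noteq> {}"
  unfolding ends_def by simp

lemma ends_subset_vertices:
  assumes "is_path C \<or> is_cycle C" "x \<in> set (snd C)"
  shows "ends x \<subseteq> set (fst C)"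
proof -
  obtain i where i: "i < length (snd C)" "x = snd C ! i"
    using assms(2) by (metis in_set_conv_nth)
  show ?thesis
    using assms(1)
  proof
    assume "is_path C"
    then have "ends x = {fst C ! i, fst C ! (i + 1)}" "length (snd C) + 1 = length (fst C)"
      using i unfolding is_path_def Let_def by auto
    then show ?thesis using i by auto
  next
    assume "is_cycle C"
    then have "ends x = {fst C ! i, fst C ! ((i + 1) mod length (fst C))}"
      and len: "length (snd C) = length (fst C)"
      using i unfolding is_cycle_def Let_def by auto
    moreover have "(i + 1) mod length (fst C) < length (fst C)"
      using i len by (metis mod_less_divisor gr_implies_not0 neq0_conv)
    ultimately show ?thesis using i len by auto
  qed
qed

lemma is_path_rev:
  assumes "is_path (vs, es)"
  shows "is_path (rev vs, rev es)"
  using assms unfolding is_path_def Let_def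
proof clarsimp
  fix i assume h: "Suc (length es) = length vs"
    "\<forall>i<length es. ends (es ! i) = {vs ! i, vs ! Suc i}" "i < length es"
  have "ends (es ! (length es - Suc i)) = {vs ! (length es - Suc i), vs ! Suc (length es - Suc i)}"
    using h by auto
  moreover have "Suc (length es - Suc i) = length vs - Suc i"
    and "length es - Suc i = length vs - Suc (Suc i)"
    using h by auto
  ultimately show "ends (rev es ! i) = {rev vs ! i, rev vs ! Suc i}"
    using h by (simp add: rev_nth insert_commute)
qed

lemma is_path_append:
  assumes "is_path (a, ea)" "is_path (b, eb)" "set a \<inter> set b = {}"
    "e \<notin> set ea" "e \<notin> set eb" "set ea \<inter> set eb = {}" "ends e = {last a, hd b}"
  shows "is_path (a @ b, ea @ e # eb)"
proof -
  have a: "a \<noteq> []" "Suc (length ea) = length a" "distinct a" "distinct ea"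
    "\<forall>i<length ea. ends (ea ! i) = {a ! i, a ! Suc i}"
    and b: "b \<noteq> []" "Suc (length eb) = length b" "distinct b" "distinct eb"
    "\<forall>i<length eb. ends (eb ! i) = {b ! i, b ! Suc i}"
    using assms(1,2) unfolding is_path_def Let_def by auto
  have "ends ((ea @ e # eb) ! i) = {(a @ b) ! i, (a @ b) ! Suc i}"
    if "i < length (ea @ e # eb)" for i
  proof -
    consider "i < length ea" | "i = length ea" | j where "i = Suc (length ea + j)" "j < length eb"
    proof (cases rule: linorder_cases[of i "length ea"])
      case greater
      then obtain j where "i = Suc (length ea + j)" by (metis less_iff_Suc_add)
      then show ?thesis using that \<open>i < length (ea @ e # eb)\<close> by simp
    qed
    then show ?thesis
    proof cases
      case 2
      then have "length a - Suc 0 = length ea" using a by simp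
      then show ?thesis
        using a b 2 assms(7) by (simp add: nth_append last_conv_nth hd_conv_nth)
    next
      case 3
      moreover have "Suc (length ea + j) - length a = j"
        and "Suc (Suc (length ea + j)) - length a = Suc j"
        using a by auto
      ultimately show ?thesis using a b by (simp add: nth_append)
    qed (use a in \<open>simp add: nth_append\<close>)
  qed
  then show ?thesis
    unfolding is_path_def Let_def fst_conv snd_conv using a b assms(3-6) by auto
qed

lemma is_cycle_close:
  assumes "is_path (a, ea)" "e \<notin> set ea" "ends e = {last a, hd a}" "length a \<ge> 2"
  shows "is_cycle (a, ea @ [e])"
proof -
  have a: "a \<noteq> []" "Suc (length ea) = length a" "distinct a" "distinct ea"
    "\<forall>i<length ea. ends (ea ! i) = {a ! i, a ! Suc i}"
    using assms(1) unfolding is_path_def Let_def by auto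
  have "ends ((ea @ [e]) ! i) = {a ! i, a ! (Suc i mod length a)}"
    if "i < length (ea @ [e])" for i
  proof (cases "i < length ea")
    case False
    then have "i = length ea" "length a - Suc 0 = length ea" using that a by auto
    then show ?thesis
      using a assms(3) by (simp add: nth_append last_conv_nth hd_conv_nth)
  qed (use a in \<open>simp add: nth_append\<close>)
  then show ?thesis
    unfolding is_cycle_def Let_def fst_conv snd_conv using a assms by auto
qed

lemma path_reorient:
  assumes "is_path P" "x = hd (fst P) \<or> x = last (fst P)"
  shows "\<exists>vs es. is_path (vs, es) \<and> last vs = x \<and> set vs = set (fst P) \<and> set es = set (snd P)"
    and "\<exists>vs es. is_path (vs, es) \<and> hd vs = x \<and> set vs = set (fst P) \<and> set es = set (snd P)"
proof -
  have "fst P \<noteq> []" and "is_path (rev (fst P), rev (snd P))"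
    using assms(1) is_path_rev[of "fst P" "snd P"] unfolding is_path_def Let_def by auto
  then show "\<exists>vs es. is_path (vs, es) \<and> last vs = x \<and> set vs = set (fst P) \<and> set es = set (snd P)"
    and "\<exists>vs es. is_path (vs, es) \<and> hd vs = x \<and> set vs = set (fst P) \<and> set es = set (snd P)"
    using assms(1,2) by (metis prod.collapse last_rev set_rev, metis prod.collapse hd_rev set_rev)
qed

definition path_cycle_system :: "(nat list \<times> edge list) set \<Rightarrow> edge set \<Rightarrow> bool" where
  "path_cycle_system Cs H = (finite Cs \<and> (\<forall>C \<in> Cs. is_path C \<or> is_cycle C) \<and>
     (\<forall>C \<in> Cs. \<forall>D \<in> Cs. C \<noteq> D \<longrightarrow> set (fst C) \<inter> set (fst D) = {}) \<and>
     H = (\<Union>C \<in> Cs. set (snd C)))"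

lemma paths_and_cycles_iff_system: "paths_and_cycles H \<longleftrightarrow> (\<exists>Cs. path_cycle_system Cs H)"
  by (simp add: paths_and_cycles_def path_cycle_system_def)

lemma path_cycle_system_finite: "path_cycle_system Cs H \<Longrightarrow> finite H"
  unfolding path_cycle_system_def by auto

lemma path_cycle_system_replace:
  assumes "path_cycle_system Cs H" "R \<subseteq> Cs" "is_path N \<or> is_cycle N"
    and "set (fst N) = (\<Union>r\<in>R. set (fst r)) \<union> V" "\<forall>D\<in>Cs - R. set (fst D) \<inter> V = {}"
    and "set (snd N) = (\<Union>r\<in>R. set (snd r)) \<union> X"
  shows "path_cycle_system ((Cs - R) \<union> {N}) (H \<union> X)"
proof -
  have disj: "\<forall>C \<in> Cs. \<forall>D \<in> Cs. C \<noteq> D \<longrightarrow> set (fst C) \<inter> set (fst D) = {}"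
    and H: "H = (\<Union>C \<in> Cs. set (snd C))"
    using assms(1) unfolding path_cycle_system_def by auto
  have N_disj: "set (fst N) \<inter> set (fst D) = {}" if D: "D \<in> Cs - R" for D
  proof -
    have "set (fst r) \<inter> set (fst D) = {}" if "r \<in> R" for r
      using disj that D assms(2) by (metis DiffE subsetD)
    then show ?thesis using assms(4,5) D by auto
  qed
  have "set (fst C) \<inter> set (fst D) = {}"
    if "C \<in> (Cs - R) \<union> {N}" "D \<in> (Cs - R) \<union> {N}" "C \<noteq> D" for C D
    using that disj N_disj[of C] N_disj[of D] by (metis DiffE Int_commute UnE singletonD)
  then have "\<forall>C \<in> (Cs - R) \<union> {N}. \<forall>D \<in> (Cs - R) \<union> {N}. C \<noteq> D \<longrightarrow> set (fst C) \<inter> set (fst D) = {}"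
    by blast
  moreover have "H \<union> X = (\<Union>C \<in> (Cs - R) \<union> {N}. set (snd C))"
    using H assms(2,6) by auto
  ultimately show ?thesis
    using assms(1,3) unfolding path_cycle_system_def by auto
qed

lemma two_le_card:
  assumes "finite A" "a \<in> A" "b \<in> A" "a \<noteq> b"
  shows "2 \<le> card A"
proof -
  have "card {a, b} \<le> card A" using assms by (intro card_mono) auto
  then show ?thesis
    using assms(4) by simp
qed

text \<open>In a union of paths and cycles, every inner vertex of a path and every vertex of a cycle
  lies on two distinct edges of its component.\<close>

lemma path_cycle_system_low_degree:
  assumes "path_cycle_system Cs H" "C \<in> Cs" "x \<in> set (fst C)" "degree H x \<le> 1"
  shows "is_path C \<and> (x = hd (fst C) \<or> x = last (fst C))"
proof -
  obtain vs es where C: "C = (vs, es)" by fastforce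
  let ?D = "{e \<in> set es. x \<in> ends e}"
  have "set es \<subseteq> H" using assms(1,2) C unfolding path_cycle_system_def by force
  then have "card ?D \<le> degree H x"
    unfolding degree_def using path_cycle_system_finite[OF assms(1)]
    by (intro card_mono) auto
  then have no_two: "\<not> 2 \<le> card ?D" using assms(4) by simp
  obtain p where p: "p < length vs" "vs ! p = x" using assms(3) C by (auto simp: in_set_conv_nth)
  have "is_path C \<or> is_cycle C" using assms(1,2) unfolding path_cycle_system_def by auto
  then show ?thesis
  proof
    assume "is_cycle C"
    then have h: "length vs \<ge> 2" "length es = length vs" "distinct es"
      "\<forall>i<length es. ends (es ! i) = {vs ! i, vs ! ((i + 1) mod length vs)}"
      using C unfolding is_cycle_def Let_def by auto
    define q where "q = (if p = 0 then length vs - 1 else p - 1)"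
    have q: "q < length vs" "(q + 1) mod length vs = p" "q \<noteq> p"
      using p h unfolding q_def by auto
    have "es ! p \<in> set es" "es ! q \<in> set es" "x \<in> ends (es ! p)" "x \<in> ends (es ! q)"
      using h p q by auto
    moreover have "es ! p \<noteq> es ! q"
      using h p q by (simp add: nth_eq_iff_index_eq)
    ultimately have "es ! p \<in> ?D" "es ! q \<in> ?D" "es ! p \<noteq> es ! q"
      by auto
    then show ?thesis using no_two two_le_card[of ?D] by auto
  next
    assume path: "is_path C"
    then have h: "vs \<noteq> []" "length es + 1 = length vs" "distinct es"
      "\<forall>i<length es. ends (es ! i) = {vs ! i, vs ! (i + 1)}"
      using C unfolding is_path_def Let_def by auto
    have "p = 0 \<or> p = length es"
    proof (rule ccontr)
      assume "\<not> (p = 0 \<or> p = length es)"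
      then have "0 < p" "p < length es" using p h by auto
      then have "es ! (p - 1) \<in> ?D" "es ! p \<in> ?D" "es ! (p - 1) \<noteq> es ! p"
        using h p by (auto intro!: nth_mem simp: nth_eq_iff_index_eq)
      then show False using no_two two_le_card[of ?D] by auto
    qed
    moreover have "length vs - Suc 0 = length es" using h by simp
    ultimately show ?thesis using path C p h by (auto simp: hd_conv_nth last_conv_nth)
  qed
qed

lemma path_cycle_system_cover_vertex:
  assumes "path_cycle_system Cs H"
  obtains Cs' where "path_cycle_system Cs' H" "\<exists>C\<in>Cs'. x \<in> set (fst C)"
    and "\<forall>y. (\<exists>C\<in>Cs. y \<in> set (fst C)) \<longrightarrow> (\<exists>C\<in>Cs'. y \<in> set (fst C))"
proof (cases "\<exists>C\<in>Cs. x \<in> set (fst C)")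
  case True
  then show ?thesis using assms that by blast
next
  case False
  have "is_path ([x], [])" unfolding is_path_def by simp
  then have "path_cycle_system ((Cs - {}) \<union> {([x], [])}) (H \<union> {})"
    using False by (intro path_cycle_system_replace[OF assms, where V = "{x}"]) auto
  then show ?thesis using that[of "Cs \<union> {([x], [])}"] by auto
qed

lemma path_cycle_system_close_path:
  assumes "path_cycle_system Cs H" "(a, ea) \<in> Cs" "is_path (a, ea)" "e \<notin> H"
    and "ends e = {last a, hd a}" "length a \<ge> 2"
  shows "path_cycle_system ((Cs - {(a, ea)}) \<union> {(a, ea @ [e])}) (H \<union> {e})"
proof (rule path_cycle_system_replace[OF assms(1), where V = "{}"])
  have "set ea \<subseteq> H" using assms(1,2) unfolding path_cycle_system_def by auto
  then show "is_path (a, ea @ [e]) \<or> is_cycle (a, ea @ [e])"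
    using is_cycle_close assms(3-6) by blast
qed (use assms(2) in auto)

lemma path_cycle_system_join_paths:
  assumes "path_cycle_system Cs H" "P \<in> Cs" "Q \<in> Cs" "P \<noteq> Q" "e \<notin> H"
    and "is_path (a, ea)" "set a = set (fst P)" "set ea = set (snd P)"
    and "is_path (b, eb)" "set b = set (fst Q)" "set eb = set (snd Q)"
    and "ends e = {last a, hd b}"
  shows "path_cycle_system ((Cs - {P, Q}) \<union> {(a @ b, ea @ e # eb)}) (H \<union> {e})"
proof (rule path_cycle_system_replace[OF assms(1), where V = "{}"])
  have disj: "set a \<inter> set b = {}"
    using assms(1-4,7,10) unfolding path_cycle_system_def by blast
  have "set ea \<subseteq> H" "set eb \<subseteq> H"
    using assms(1-3,8,11) unfolding path_cycle_system_def by auto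
  moreover have "set ea \<inter> set eb = {}"
  proof (rule ccontr)
    assume "set ea \<inter> set eb \<noteq> {}"
    then obtain x where "x \<in> set ea" "x \<in> set eb" by blast
    then have "ends x \<subseteq> set a" "ends x \<subseteq> set b"
      using ends_subset_vertices assms(6,9) by fastforce+
    then show False using disj ends_nonempty[of x] by blast
  qed
  ultimately show "is_path (a @ b, ea @ e # eb) \<or> is_cycle (a @ b, ea @ e # eb)"
    using is_path_append assms(5,6,9,12) disj by blast
qed (use assms(2,3,7,8,10,11) in auto)

lemma paths_and_cycles_insert:
  assumes "paths_and_cycles H" "e \<notin> H" "ends e = {u, v}" "u \<noteq> v"
    and "degree H u \<le> 1" "degree H v \<le> 1"
  shows "paths_and_cycles (insert e H)"
proof -
  obtain Cs0 where "path_cycle_system Cs0 H"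
    using assms(1) paths_and_cycles_iff_system by blast
  then obtain Cs1 where Cs1: "path_cycle_system Cs1 H" "\<exists>C\<in>Cs1. u \<in> set (fst C)"
    by (rule path_cycle_system_cover_vertex)
  obtain Cs where sys: "path_cycle_system Cs H"
    and "\<exists>C\<in>Cs. u \<in> set (fst C)" "\<exists>C\<in>Cs. v \<in> set (fst C)"
    using path_cycle_system_cover_vertex[OF Cs1(1), of v] Cs1(2) by metis
  then obtain P Q where P: "P \<in> Cs" "u \<in> set (fst P)" and Q: "Q \<in> Cs" "v \<in> set (fst Q)"
    by blast
  have P_end: "is_path P" "u = hd (fst P) \<or> u = last (fst P)"
    using path_cycle_system_low_degree[OF sys P assms(5)] by auto
  have Q_end: "is_path Q" "v = hd (fst Q) \<or> v = last (fst Q)"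
    using path_cycle_system_low_degree[OF sys Q assms(6)] by auto
  show ?thesis
  proof (cases "P = Q")
    case True
    obtain a ea where Pa: "P = (a, ea)" by fastforce
    have "u \<in> {hd a, last a}" "v \<in> {hd a, last a}"
      using P_end(2) Q_end(2) True Pa by auto
    then have "ends e = {last a, hd a}"
      using assms(3,4) by blast
    moreover have "card {u, v} \<le> card (set a)"
      using P Q True Pa by (intro card_mono) auto
    then have "length a \<ge> 2"
      using assms(4) card_length[of a] by simp
    ultimately have "path_cycle_system ((Cs - {P}) \<union> {(a, ea @ [e])}) (H \<union> {e})"
      using path_cycle_system_close_path[OF sys] P_end(1) P(1) Pa assms(2) by blast
    then show ?thesis
      using paths_and_cycles_iff_system by (metis Un_empty_right Un_insert_right)
  next
    case False
    obtain a ea where a: "is_path (a, ea)" "last a = u" "set a = set (fst P)" "set ea = set (snd P)"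
      using path_reorient(1)[OF P_end] by blast
    obtain b eb where b: "is_path (b, eb)" "hd b = v" "set b = set (fst Q)" "set eb = set (snd Q)"
      using path_reorient(2)[OF Q_end] by blast
    have "path_cycle_system ((Cs - {P, Q}) \<union> {(a @ b, ea @ e # eb)}) (H \<union> {e})"
      by (rule path_cycle_system_join_paths[OF sys P(1) Q(1) False assms(2) a(1,3,4) b(1,3,4)])
        (use a(2) b(2) assms(3) in simp)
    then show ?thesis
      using paths_and_cycles_iff_system by (metis Un_empty_right Un_insert_right)
  qed
qed

lemma finite_muKn_edges: "finite (muKn_edges mu n)"
proof -
  have "muKn_edges mu n \<subseteq> {..<n} \<times> {..<n} \<times> {..<mu}"
    unfolding muKn_edges_def by auto
  then show ?thesis by (rule finite_subset) auto
qed

lemma partial_decomp_finite: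
  assumes "partial_decomp mu n k G" "i < k"
  shows "finite (G i)"
  using assms finite_subset[OF _ finite_muKn_edges] unfolding partial_decomp_def by metis

lemma incident_edges_subset_image:
  "{e \<in> muKn_edges mu n. x \<in> ends e \<and> (\<forall>y\<in>Y. y \<notin> ends e)}
     \<subseteq> (\<lambda>(w, j). (min x w, max x w, j)) ` (({0..<n} - insert x Y) \<times> {..<mu})"
proof
  fix e assume "e \<in> {e \<in> muKn_edges mu n. x \<in> ends e \<and> (\<forall>y\<in>Y. y \<notin> ends e)}"
  then obtain a b j where e: "e = (a, b, j)" "a < b" "b < n" "j < mu" "x = a \<or> x = b"
    and Y: "\<forall>y\<in>Y. y \<noteq> a \<and> y \<noteq> b"
    unfolding muKn_edges_def by auto
  show "e \<in> (\<lambda>(w, j). (min x w, max x w, j)) ` (({0..<n} - insert x Y) \<times> {..<mu})"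
  proof (cases "x = a")
    case True
    then show ?thesis using e Y by (intro image_eqI[of _ _ "(b, j)"]) auto
  next
    case False
    then show ?thesis using e Y by (intro image_eqI[of _ _ "(a, j)"]) auto
  qed
qed

lemma card_incident_edges_le:
  assumes "x < n"
  shows "card {e \<in> muKn_edges mu n. x \<in> ends e} \<le> mu * (n - 1)"
proof -
  have "card {e \<in> muKn_edges mu n. x \<in> ends e} \<le> card (({0..<n} - {x}) \<times> {..<mu})"
    using incident_edges_subset_image[of mu n x "{}"]
    by (intro order_trans[OF card_mono card_image_le]) auto
  then show ?thesis
    using assms by (simp add: card_cartesian_product mult.commute)
qed

text \<open>The \<mu> edges joining u and v are counted once, hence 2\<mu>(n-1) - \<mu>.\<close>

lemma card_incident_pair_le:
  assumes "u < v" "v < n"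
  shows "card {e \<in> muKn_edges mu n. u \<in> ends e \<or> v \<in> ends e} \<le> mu * (2 * n - 3)"
proof -
  let ?U = "{e \<in> muKn_edges mu n. u \<in> ends e}"
  let ?V = "{e \<in> muKn_edges mu n. v \<in> ends e \<and> (\<forall>y\<in>{u}. y \<notin> ends e)}"
  have "card {e \<in> muKn_edges mu n. u \<in> ends e \<or> v \<in> ends e} \<le> card (?U \<union> ?V)"
    using finite_muKn_edges by (intro card_mono) auto
  also have "\<dots> \<le> card ?U + card ?V" by (rule card_Un_le)
  also have "card ?V \<le> card (({0..<n} - {v, u}) \<times> {..<mu})"
    using incident_edges_subset_image[of mu n v "{u}"]
    by (intro order_trans[OF card_mono card_image_le]) auto
  also have "\<dots> = (n - 2) * mu"
    using assms by (simp add: card_cartesian_product card_Diff_subset numeral_2_eq_2)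
  finally show ?thesis
    using card_incident_edges_le[of u n mu] assms by (simp add: algebra_simps diff_mult_distrib2)
qed

lemma card_used_edges_less:
  assumes "partial_decomp mu n k G" "e \<in> muKn_edges mu n - used_edges k G" "P e"
  shows "card {e' \<in> used_edges k G. P e'} < card {e' \<in> muKn_edges mu n. P e'}"
proof (rule psubset_card_mono)
  have "used_edges k G \<subseteq> muKn_edges mu n"
    using assms(1) unfolding partial_decomp_def used_edges_def by auto
  then show "{e' \<in> used_edges k G. P e'} \<subset> {e' \<in> muKn_edges mu n. P e'}"
    using assms(2,3) by blast
qed (use finite_muKn_edges in simp)

lemma sum_card_colour_classes:
  assumes "partial_decomp mu n k G"
  shows "(\<Sum>i<k. card {e \<in> G i. P e}) = card {e \<in> used_edges k G. P e}"
proof -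
  have "{e \<in> used_edges k G. P e} = (\<Union>i<k. {e \<in> G i. P e})"
    unfolding used_edges_def by auto
  moreover have "card (\<Union>i<k. {e \<in> G i. P e}) = (\<Sum>i<k. card {e \<in> G i. P e})"
  proof (rule card_UN_disjoint)
    show "\<forall>i\<in>{..<k}. \<forall>j\<in>{..<k}. i \<noteq> j \<longrightarrow> {e \<in> G i. P e} \<inter> {e \<in> G j. P e} = {}"
      using assms unfolding partial_decomp_def by blast
  qed (use partial_decomp_finite[OF assms] in auto)
  ultimately show ?thesis by simp
qed

lemma degree_insert:
  assumes "finite H" "e \<notin> H" "x \<in> ends e"
  shows "degree (insert e H) x = degree H x + 1"
proof -
  have "{e' \<in> insert e H. x \<in> ends e'} = insert e {e' \<in> H. x \<in> ends e'}"
    using assms by auto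
  then show ?thesis unfolding degree_def using assms by simp
qed

lemma exists_class_low_degrees:
  assumes "partial_decomp mu n k G"
    and "card {e \<in> used_edges k G. u \<in> ends e \<or> v \<in> ends e} < 2 * k"
  shows "\<exists>j<k. degree (G j) u \<le> 1 \<and> degree (G j) v \<le> 1"
proof (rule ccontr)
  assume none: "\<not> ?thesis"
  have "2 \<le> card {e \<in> G j. u \<in> ends e \<or> v \<in> ends e}" if "j < k" for j
  proof -
    have "degree (G j) u \<le> card {e \<in> G j. u \<in> ends e \<or> v \<in> ends e}"
      and "degree (G j) v \<le> card {e \<in> G j. u \<in> ends e \<or> v \<in> ends e}"
      unfolding degree_def using partial_decomp_finite[OF assms(1) that]
      by (intro card_mono; auto)+
    then show ?thesis using none that by fastforce
  qed
  then have "(\<Sum>j<k. 2) \<le> (\<Sum>j<k. card {e \<in> G j. u \<in> ends e \<or> v \<in> ends e})"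
    by (intro sum_mono) auto
  then show False
    using assms sum_card_colour_classes[OF assms(1)] by simp
qed

lemma exists_class_low_degrees_not_two_factor:
  assumes "partial_decomp mu n k G" "u < n" "v < n" "e \<notin> used_edges k G" "ends e = {u, v}"
    and "card {e' \<in> used_edges k G. u \<in> ends e'} + card {e' \<in> used_edges k G. v \<in> ends e'}
           < 2 * k + 2 * num_two_factors mu n k G"
  shows "\<exists>j<k. degree (G j) u \<le> 1 \<and> degree (G j) v \<le> 1 \<and> \<not> two_factor mu n (insert e (G j))"
proof (rule ccontr)
  assume none: "\<not> ?thesis"
  let ?w = "\<lambda>j. 2 + 2 * of_bool (two_factor mu n (G j)) :: nat"
  have "?w j \<le> degree (G j) u + degree (G j) v" if j: "j < k" for j
  proof (cases "two_factor mu n (G j)")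
    case True
    then show ?thesis using assms(2,3) unfolding two_factor_def by simp
  next
    case False
    have fin: "finite (G j)" and "e \<notin> G j"
      using partial_decomp_finite[OF assms(1) j] assms(4) j unfolding used_edges_def by auto
    have one: "degree (G j) u = 1 \<and> degree (G j) v = 1"
      if "two_factor mu n (insert e (G j))"
    proof -
      have "degree (insert e (G j)) u = 2" "degree (insert e (G j)) v = 2"
        using that assms(2,3) unfolding two_factor_def by auto
      then show ?thesis
        using degree_insert[OF fin \<open>e \<notin> G j\<close>, of u] degree_insert[OF fin \<open>e \<notin> G j\<close>, of v] assms(5)
        by simp
    qed
    have "\<not> (degree (G j) u \<le> 1 \<and> degree (G j) v \<le> 1 \<and> \<not> two_factor mu n (insert e (G j)))"
      using none j by blast
    then show ?thesis
      using False by (cases "two_factor mu n (insert e (G j))") (use one in auto)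
  qed
  then have "(\<Sum>j<k. ?w j) \<le> (\<Sum>j<k. degree (G j) u + degree (G j) v)"
    by (intro sum_mono) auto
  also have "\<dots> = card {e' \<in> used_edges k G. u \<in> ends e'} + card {e' \<in> used_edges k G. v \<in> ends e'}"
    unfolding sum.distrib degree_def by (simp add: sum_card_colour_classes[OF assms(1)])
  also have "(\<Sum>j<k. ?w j) = 2 * k + 2 * num_two_factors mu n k G"
    unfolding sum.distrib num_two_factors_def by (simp add: sum_distrib_left[symmetric] Int_def conj_commute)
  finally show False using assms(6) by simp
qed

lemma partial_path_decomp_insert_edge:
  assumes "partial_path_decomp mu n k G" "e \<in> muKn_edges mu n - used_edges k G" "j < k"
    and "ends e = {u, v}" "u \<noteq> v" "degree (G j) u \<le> 1" "degree (G j) v \<le> 1"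
  shows "partial_path_decomp mu n k (G(j := insert e (G j)))"
proof -
  have "e \<notin> G i" if "i < k" for i
    using assms(2) that unfolding used_edges_def by auto
  moreover have "paths_and_cycles (insert e (G j))"
    using assms(1,3-7) calculation[OF assms(3)] paths_and_cycles_insert
    unfolding partial_path_decomp_def by blast
  ultimately show ?thesis
    using assms(1-3) unfolding partial_path_decomp_def partial_decomp_def by auto
qed

lemma num_two_factors_update_le:
  "num_two_factors mu n k (G(j := H)) \<le> num_two_factors mu n k G + of_bool (two_factor mu n H)"
proof -
  let ?S = "{i. i < k \<and> two_factor mu n (G i)}"
  show ?thesis
  proof (cases "two_factor mu n H")
    case True
    have "{i. i < k \<and> two_factor mu n ((G(j := H)) i)} \<subseteq> insert j ?S"
      by auto
    then have "num_two_factors mu n k (G(j := H)) \<le> card (insert j ?S)"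
      unfolding num_two_factors_def by (intro card_mono) auto
    also have "\<dots> \<le> card ?S + 1"
      by (simp add: card_insert_if)
    finally show ?thesis
      using True unfolding num_two_factors_def by simp
  next
    case False
    then have "{i. i < k \<and> two_factor mu n ((G(j := H)) i)} \<subseteq> ?S"
      by auto
    then have "num_two_factors mu n k (G(j := H)) \<le> card ?S"
      unfolding num_two_factors_def by (intro card_mono) auto
    then show ?thesis
      unfolding num_two_factors_def by simp
  qed
qed

theorem lemma5:
  fixes k n m mu :: nat and G :: "nat \<Rightarrow> edge set"
  assumes "0 < k" "0 < n" "0 < m" "0 < mu"
    and "m + 2 \<ge> n"
    and "m + 2 = n \<longrightarrow> n \<ge> 4"
    and "2 * k \<ge> mu * (n + m - 1)"
    and "strict_partial_decomp mu n k G"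
    and "partial_path_decomp mu n k G"
    and "2 * num_two_factors mu n k G \<le> mu * (m - 1)"
  shows "\<exists>e \<in> muKn_edges mu n - used_edges k G. \<exists>j < k.
           partial_path_decomp mu n k (G(j := insert e (G j))) \<and>
           2 * num_two_factors mu n k (G(j := insert e (G j))) \<le> mu * (m - 1)"
proof -
  have decomp: "partial_decomp mu n k G"
    using assms(8) unfolding strict_partial_decomp_def by simp
  have "used_edges k G \<subseteq> muKn_edges mu n"
    using decomp unfolding partial_decomp_def used_edges_def by auto
  then obtain e where e: "e \<in> muKn_edges mu n - used_edges k G"
    using assms(8) unfolding strict_partial_decomp_def by blast
  then obtain u v c where uv: "e = (u, v, c)" "u < v" "v < n"
    unfolding muKn_edges_def by auto
  have ends_e: "ends e = {u, v}" using uv(1) by simp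
  define t where "t = num_two_factors mu n k G"
  have "\<exists>j<k. degree (G j) u \<le> 1 \<and> degree (G j) v \<le> 1 \<and>
      (2 * (t + 1) \<le> mu * (m - 1) \<or> \<not> two_factor mu n (insert e (G j)))"
  proof (cases "2 * (t + 1) \<le> mu * (m - 1)")
    case True
    have "card {e' \<in> used_edges k G. u \<in> ends e' \<or> v \<in> ends e'}
        < card {e' \<in> muKn_edges mu n. u \<in> ends e' \<or> v \<in> ends e'}"
      using card_used_edges_less[OF decomp e] ends_e by simp
    moreover have "mu * (2 * n - 3) \<le> mu * (n + m - 1)"
      using assms(5) by (intro mult_le_mono2) linarith
    ultimately have "card {e' \<in> used_edges k G. u \<in> ends e' \<or> v \<in> ends e'} < 2 * k"
      using card_incident_pair_le[OF uv(2,3), of mu] assms(7) by linarith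
    then show ?thesis
      using exists_class_low_degrees[OF decomp] True by blast
  next
    case False
    have used_at: "card {e' \<in> used_edges k G. x \<in> ends e'} < mu * (n - 1)" if "x \<in> {u, v}" for x
      using card_used_edges_less[OF decomp e, of "\<lambda>e'. x \<in> ends e'"]
        card_incident_edges_le[of x n mu] ends_e uv that by auto
    have "2 * (n - 1) \<le> (n + m - 1) + (m - 1)"
      using assms(3,5,6) uv by linarith
    then have "2 * (mu * (n - 1)) \<le> mu * (n + m - 1) + mu * (m - 1)"
      by (metis add_mult_distrib2 mult_le_mono2 mult.left_commute)
    then have "card {e' \<in> used_edges k G. u \<in> ends e'} + card {e' \<in> used_edges k G. v \<in> ends e'}
        < 2 * k + 2 * t"
      using used_at[of u] used_at[of v] False assms(7) by simp
    moreover have "u < n" "e \<notin> used_edges k G" using uv e by auto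
    ultimately show ?thesis
      using exists_class_low_degrees_not_two_factor[OF decomp _ uv(3) _ ends_e] unfolding t_def by blast
  qed
  then obtain j where j: "j < k" "degree (G j) u \<le> 1" "degree (G j) v \<le> 1"
    and slack: "2 * (t + 1) \<le> mu * (m - 1) \<or> \<not> two_factor mu n (insert e (G j))"
    by blast
  have "2 * num_two_factors mu n k (G(j := insert e (G j))) \<le> mu * (m - 1)"
    using num_two_factors_update_le[of mu n k G j "insert e (G j)"] slack assms(10)
    unfolding t_def by (cases "two_factor mu n (insert e (G j))") auto
  moreover have "partial_path_decomp mu n k (G(j := insert e (G j)))"
    using partial_path_decomp_insert_edge[OF assms(9) e j(1) ends_e _ j(2,3)] uv(2) by simp
  ultimately show ?thesis
    using e j(1) by blast
qed

end
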